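(* Fix $\lambda>0$ and let $P_n = e^{-\lambda}\lambda^n/n!$. Let $\mathbb P$ be the set of compactly supported Borel probability measures on $\mathbb R$, equipped with the topology in which $\rho_n\to\rho$ iff $\int\phi\,d\rho_n\to\int\phi\,d\rho$ for every continuous compactly supported $\phi\colon\mathbb R\to\mathbb R$. For $k\geqslant 1$ let $h_k\colon\mathbb R\to\mathbb R$, $y\mapsto y/k$, and let $(h_k)_\star$ denote pushforward of measures. For $x\in\mathbb R$ define $\Sigma_x,\Sigma\colon\mathbb P\to\mathbb P$ by $$\Sigma_x(\rho) = \sum_{n=0}^\infty P_n\,(h_{n+1})_\star\big(\delta_x * \rho^{*n}\big),\qquad \Sigma(\rho) = \sum_{n=0}^\infty P_n\,(h_{n+1})_\star\big(\rho^{*(n+1)}\big),$$ where $*$ is convolution of measures, $\rho^{*n}$ the $n$-th convolution power and $\rho^{*0}=\delta_0$. Then for every $x\in\mathbb R$ the operators $\Sigma_x$ and $\Sigma$ are continuous on $\mathbb P$.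
   Context: $\delta_a$ is the Dirac measure at $a$; the series define measures via $\int\phi\,d\Sigma_x(\rho) = \sum_n P_n\int \phi(y/(n+1))\,d(\delta_x*\rho^{*n})(y)$, and similarly for $\Sigma$. *)

theory Defs
  imports "HOL-Probability.Probability"
begin

definition poisson_weight :: "real \<Rightarrow> nat \<Rightarrow> real" where
  "poisson_weight l n = exp (- l) * l ^ n / fact n"

definition cs_prob :: "real measure set" where
  "cs_prob = {M. prob_space M \<and> sets M = sets borel \<and>
                 (\<exists>K. compact K \<and> emeasure M (UNIV - K) = 0)}"

definition Cc :: "(real \<Rightarrow> real) set" where
  "Cc = {\<phi>. continuous_on UNIV \<phi> \<and> (\<exists>K. compact K \<and> (\<forall>y. y \<notin> K \<longrightarrow> \<phi> y = 0))}"

text \<open>The topology on cs_prob: coarsest topology making every map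
  rho |-> integral of phi wrt rho (phi in Cc) continuous.\<close>
definition vague_top :: "real measure topology" where
  "vague_top = topology (\<lambda>U. U \<subseteq> cs_prob \<and>
     (\<forall>\<rho>\<in>U. \<exists>F \<delta>. finite F \<and> F \<subseteq> Cc \<and> \<delta> > 0 \<and>
        {\<sigma>\<in>cs_prob. \<forall>\<phi>\<in>F. \<bar>integral\<^sup>L \<sigma> \<phi> - integral\<^sup>L \<rho> \<phi>\<bar> < \<delta>} \<subseteq> U))"

fun conv_pow :: "real measure \<Rightarrow> nat \<Rightarrow> real measure" where
  "conv_pow \<rho> 0 = return borel 0"
| "conv_pow \<rho> (Suc n) = convolution \<rho> (conv_pow \<rho> n)"

definition push_h :: "nat \<Rightarrow> real measure \<Rightarrow> real measure" where
  "push_h k M = distr M borel (\<lambda>y. y / real k)"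

definition poisson_mix :: "real \<Rightarrow> (nat \<Rightarrow> real measure) \<Rightarrow> real measure" where
  "poisson_mix l Ms = measure_of UNIV (sets borel)
      (\<lambda>A. \<Sum>n. ennreal (poisson_weight l n) * emeasure (Ms n) A)"

definition Sigma_x :: "real \<Rightarrow> real \<Rightarrow> real measure \<Rightarrow> real measure" where
  "Sigma_x l x \<rho> = poisson_mix l (\<lambda>n. push_h (n + 1) (convolution (return borel x) (conv_pow \<rho> n)))"

definition Sigma_op :: "real \<Rightarrow> real measure \<Rightarrow> real measure" where
  "Sigma_op l \<rho> = poisson_mix l (\<lambda>n. push_h (n + 1) (conv_pow \<rho> (n + 1)))"

end

theory Submission
  imports Defs
begin

(* The integral of a test function against Sigma_x(sigma) or Sigma(sigma) is a Poisson average
   of integrals against push-forwards of convolution powers of sigma, so continuity can be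
   propagated through the constructions one at a time: identity, constants, push-forward,
   convolution and Poisson mixtures all preserve continuity of sigma |-> int g d(T sigma) for
   bounded continuous g. Bounded (rather than compactly supported) test functions are what make
   convolution tractable: g(x + y) is uniformly approximated, on a square carrying the limit
   measures, by finite sums of products u(x) v(y) (Stone-Weierstrass), whose integrals against
   product measures factor. At a compactly supported limit the two kinds of test functions give
   the same neighbourhoods, by a tightness argument with a cutoff function. A Poisson mixture
   is controlled by finitely many of its terms up to a uniformly small tail. *)

lemma tendsto_by_approximation:
  fixes f :: "'a \<Rightarrow> real"
  assumes "\<And>\<eta>. \<eta> > 0 \<Longrightarrow> \<exists>g d e. (g \<longlongrightarrow> d) F \<and> (e \<longlongrightarrow> 0) F \<and> \<bar>c - d\<bar> \<le> \<eta> \<and>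
             (\<forall>\<^sub>F x in F. \<bar>f x - g x\<bar> \<le> \<eta> + e x)"
  shows "(f \<longlongrightarrow> c) F"
proof (rule tendstoI)
  fix \<epsilon> :: real assume "\<epsilon> > 0"
  then obtain g d e where g: "(g \<longlongrightarrow> d) F" and e: "(e \<longlongrightarrow> 0) F" and cd: "\<bar>c - d\<bar> \<le> \<epsilon>/4"
    and approx: "\<forall>\<^sub>F x in F. \<bar>f x - g x\<bar> \<le> \<epsilon>/4 + e x"
    using assms[of "\<epsilon>/4"] by auto
  have "\<forall>\<^sub>F x in F. dist (g x) d < \<epsilon>/4" "\<forall>\<^sub>F x in F. dist (e x) 0 < \<epsilon>/4"
    using tendstoD[OF g, of "\<epsilon>/4"] tendstoD[OF e, of "\<epsilon>/4"] \<open>\<epsilon> > 0\<close> by auto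
  with approx show "\<forall>\<^sub>F x in F. dist (f x) c < \<epsilon>"
  proof eventually_elim
    case (elim x)
    then show ?case using cd unfolding dist_real_def abs_le_iff abs_less_iff by linarith
  qed
qed

section \<open>Neighbourhood filters of the vague topology\<close>

definition test_ball :: "real measure \<Rightarrow> (real \<Rightarrow> real) set \<Rightarrow> real \<Rightarrow> real measure set" where
  "test_ball \<rho> F \<delta> = {\<sigma>\<in>cs_prob. \<forall>\<phi>\<in>F. \<bar>integral\<^sup>L \<sigma> \<phi> - integral\<^sup>L \<rho> \<phi>\<bar> < \<delta>}"

definition test_nhds :: "(real \<Rightarrow> real) set \<Rightarrow> real measure \<Rightarrow> real measure filter" where
  "test_nhds C \<rho> = (\<Sqinter>(F, \<delta>)\<in>{F. finite F \<and> F \<subseteq> C} \<times> {0<..}. principal (test_ball \<rho> F \<delta>))"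

lemma eventually_test_nhds:
  "eventually P (test_nhds C \<rho>) \<longleftrightarrow>
     (\<exists>F \<delta>. finite F \<and> F \<subseteq> C \<and> \<delta> > 0 \<and> (\<forall>\<sigma>\<in>test_ball \<rho> F \<delta>. P \<sigma>))"
proof -
  let ?B = "{F. finite F \<and> F \<subseteq> C} \<times> {0::real<..}"
  have "eventually P (test_nhds C \<rho>) \<longleftrightarrow>
      (\<exists>(F, \<delta>)\<in>?B. eventually P (principal (test_ball \<rho> F \<delta>)))"
    unfolding test_nhds_def case_prod_beta
  proof (rule eventually_INF_base)
    show "?B \<noteq> {}" by (auto intro!: exI[of _ "({}, 1)"])
  next
    fix a b assume "a \<in> ?B" "b \<in> ?B"
    then have "(fst a \<union> fst b, min (snd a) (snd b)) \<in> ?B" by auto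
    moreover have "test_ball \<rho> (fst a \<union> fst b) (min (snd a) (snd b)) \<subseteq>
        test_ball \<rho> (fst a) (snd a) \<inter> test_ball \<rho> (fst b) (snd b)"
      by (auto simp: test_ball_def)
    ultimately show "\<exists>x\<in>?B. principal (test_ball \<rho> (fst x) (snd x)) \<le>
        principal (test_ball \<rho> (fst a) (snd a)) \<sqinter> principal (test_ball \<rho> (fst b) (snd b))"
      by (intro bexI[of _ "(fst a \<union> fst b, min (snd a) (snd b))"]) auto
  qed
  then show ?thesis by (auto simp: eventually_principal)
qed

lemma eventually_test_nhds_cs_prob: "\<forall>\<^sub>F \<sigma> in test_nhds C \<rho>. \<sigma> \<in> cs_prob"
  unfolding eventually_test_nhds test_ball_def by (intro exI[of _ "{}"] exI[of _ 1]) auto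

lemma tendsto_test_nhds_cong:
  assumes "(g \<longlongrightarrow> g \<rho>) (test_nhds C \<rho>)" "\<rho> \<in> cs_prob" "\<And>\<sigma>. \<sigma> \<in> cs_prob \<Longrightarrow> f \<sigma> = g \<sigma>"
  shows "(f \<longlongrightarrow> f \<rho>) (test_nhds C \<rho>)"
proof -
  have "\<forall>\<^sub>F \<sigma> in test_nhds C \<rho>. g \<sigma> = f \<sigma>"
    using eventually_test_nhds_cs_prob by eventually_elim (simp add: assms(3))
  from tendsto_cong[OF this] assms(1) show ?thesis by (simp add: assms(2,3))
qed

lemma tendsto_integral_test_nhds:
  "\<phi> \<in> C \<Longrightarrow> ((\<lambda>\<sigma>. integral\<^sup>L \<sigma> \<phi>) \<longlongrightarrow> integral\<^sup>L \<rho> \<phi>) (test_nhds C \<rho>)"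
proof (rule tendstoI)
  fix \<epsilon> :: real assume "\<phi> \<in> C" "\<epsilon> > 0"
  then show "\<forall>\<^sub>F \<sigma> in test_nhds C \<rho>. dist (integral\<^sup>L \<sigma> \<phi>) (integral\<^sup>L \<rho> \<phi>) < \<epsilon>"
    unfolding eventually_test_nhds test_ball_def dist_real_def
    by (intro exI[of _ "{\<phi>}"] exI[of _ \<epsilon>]) auto
qed

lemma openin_vague_top:
  "openin vague_top U \<longleftrightarrow> U \<subseteq> cs_prob \<and> (\<forall>\<rho>\<in>U. \<forall>\<^sub>F \<sigma> in test_nhds Cc \<rho>. \<sigma> \<in> U)"
proof -
  have eq: "vague_top = topology (\<lambda>U. U \<subseteq> cs_prob \<and> (\<forall>\<rho>\<in>U. \<forall>\<^sub>F \<sigma> in test_nhds Cc \<rho>. \<sigma> \<in> U))"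
      (is "_ = topology ?L")
    by (simp only: vague_top_def eventually_test_nhds test_ball_def[symmetric]
        subset_eq[of "test_ball _ _ _"])
  have "istopology ?L"
    unfolding istopology_def
  proof (rule conjI; intro allI impI)
    fix S T assume "S \<subseteq> cs_prob \<and> (\<forall>\<rho>\<in>S. \<forall>\<^sub>F \<sigma> in test_nhds Cc \<rho>. \<sigma> \<in> S)"
      "T \<subseteq> cs_prob \<and> (\<forall>\<rho>\<in>T. \<forall>\<^sub>F \<sigma> in test_nhds Cc \<rho>. \<sigma> \<in> T)"
    then show "S \<inter> T \<subseteq> cs_prob \<and> (\<forall>\<rho>\<in>S \<inter> T. \<forall>\<^sub>F \<sigma> in test_nhds Cc \<rho>. \<sigma> \<in> S \<inter> T)"
      by (auto intro: eventually_conj)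
  next
    fix K assume K: "\<forall>S\<in>K. S \<subseteq> cs_prob \<and> (\<forall>\<rho>\<in>S. \<forall>\<^sub>F \<sigma> in test_nhds Cc \<rho>. \<sigma> \<in> S)"
    show "\<Union>K \<subseteq> cs_prob \<and> (\<forall>\<rho>\<in>\<Union>K. \<forall>\<^sub>F \<sigma> in test_nhds Cc \<rho>. \<sigma> \<in> \<Union>K)"
    proof (intro conjI ballI)
      fix \<rho> assume "\<rho> \<in> \<Union>K"
      then obtain S where "S \<in> K" "\<rho> \<in> S" by blast
      with K show "\<forall>\<^sub>F \<sigma> in test_nhds Cc \<rho>. \<sigma> \<in> \<Union>K"
        by (blast intro: eventually_mono)
    qed (use K in blast)
  qed
  then show ?thesis by (simp only: eq topology_inverse')
qed

lemma topspace_vague_top: "topspace vague_top = cs_prob"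
proof -
  have "openin vague_top cs_prob"
    by (simp add: openin_vague_top eventually_test_nhds_cs_prob)
  then show ?thesis
    using openin_subset[of vague_top] openin_vague_top by (auto simp: topspace_def)
qed

lemma continuous_map_vague_topI:
  assumes maps: "f ` cs_prob \<subseteq> cs_prob"
    and lim: "\<And>\<rho> \<phi>. \<rho> \<in> cs_prob \<Longrightarrow> \<phi> \<in> Cc \<Longrightarrow>
               ((\<lambda>\<sigma>. integral\<^sup>L (f \<sigma>) \<phi>) \<longlongrightarrow> integral\<^sup>L (f \<rho>) \<phi>) (test_nhds Cc \<rho>)"
  shows "continuous_map vague_top vague_top f"
  unfolding continuous_map topspace_vague_top
proof (intro conjI allI impI)
  show "f ` cs_prob \<subseteq> cs_prob" by fact
  fix U assume "openin vague_top U"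
  then have U: "U \<subseteq> cs_prob" "\<And>\<tau>. \<tau> \<in> U \<Longrightarrow> \<forall>\<^sub>F \<sigma> in test_nhds Cc \<tau>. \<sigma> \<in> U"
    by (auto simp: openin_vague_top)
  have "\<forall>\<^sub>F \<sigma> in test_nhds Cc \<rho>. \<sigma> \<in> {x \<in> cs_prob. f x \<in> U}"
    if \<rho>: "\<rho> \<in> cs_prob" "f \<rho> \<in> U" for \<rho>
  proof -
    obtain F \<delta> where F: "finite F" "F \<subseteq> Cc" "\<delta> > 0" and sub: "test_ball (f \<rho>) F \<delta> \<subseteq> U"
      using U(2)[OF \<rho>(2)] unfolding eventually_test_nhds by blast
    have "\<forall>\<^sub>F \<sigma> in test_nhds Cc \<rho>. \<forall>\<phi>\<in>F. \<bar>integral\<^sup>L (f \<sigma>) \<phi> - integral\<^sup>L (f \<rho>) \<phi>\<bar> < \<delta>"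
    proof (rule eventually_ball_finite[OF \<open>finite F\<close>], rule ballI)
      fix \<phi> assume "\<phi> \<in> F"
      with F show "\<forall>\<^sub>F \<sigma> in test_nhds Cc \<rho>. \<bar>integral\<^sup>L (f \<sigma>) \<phi> - integral\<^sup>L (f \<rho>) \<phi>\<bar> < \<delta>"
        using tendstoD[OF lim[OF \<rho>(1)], of \<phi> \<delta>] by (auto simp: dist_real_def)
    qed
    with eventually_test_nhds_cs_prob show ?thesis
      by eventually_elim (use maps sub in \<open>auto simp: test_ball_def\<close>)
  qed
  then show "openin vague_top {x \<in> cs_prob. f x \<in> U}"
    by (auto simp: openin_vague_top)
qed

section \<open>Bounded continuous test functions and tightness\<close>

definition Cb :: "(real \<Rightarrow> real) set" where
  "Cb = {g. continuous_on UNIV g \<and> (\<exists>B. \<forall>y. \<bar>g y\<bar> \<le> B)}"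

lemma Cb_boundE:
  assumes "g \<in> Cb"
  obtains B where "B \<ge> 0" "\<And>y. \<bar>g y\<bar> \<le> B"
proof -
  obtain B where "\<forall>y. \<bar>g y\<bar> \<le> B" using assms by (auto simp: Cb_def)
  then show ?thesis by (intro that[of "max B 0"]) (auto simp: le_max_iff_disj)
qed

lemma Cb_continuous: "g \<in> Cb \<Longrightarrow> continuous_on UNIV g"
  by (simp add: Cb_def)

lemma Cb_compose_continuous:
  assumes "g \<in> Cb" "continuous_on UNIV h"
  shows "(\<lambda>y. g (h y)) \<in> Cb"
  using assms continuous_on_compose2[OF Cb_continuous[OF assms(1)] assms(2)]
  by (auto simp: Cb_def)

lemma Cc_subset_Cb: "Cc \<subseteq> Cb"
proof
  fix \<phi> assume "\<phi> \<in> Cc"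
  then obtain K where cont: "continuous_on UNIV \<phi>" and K: "compact K" "\<And>y. y \<notin> K \<Longrightarrow> \<phi> y = 0"
    by (auto simp: Cc_def)
  have "compact (\<phi> ` K)"
    using K(1) cont by (meson compact_continuous_image continuous_on_subset subset_UNIV)
  then obtain B where B: "\<forall>z\<in>\<phi> ` K. norm z \<le> B" using compact_imp_bounded bounded_iff by metis
  have "\<bar>\<phi> y\<bar> \<le> max B 0" for y using B K(2)[of y] by (cases "y \<in> K") auto
  then show "\<phi> \<in> Cb" using cont by (auto simp: Cb_def)
qed

lemma borel_measurable_Cb: "g \<in> Cb \<Longrightarrow> sets M = sets borel \<Longrightarrow> g \<in> borel_measurable M"
  using borel_measurable_continuous_onI[OF Cb_continuous] measurable_cong_sets by blast

lemma integrable_Cb: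
  assumes "finite_measure M" "sets M = sets borel" "g \<in> Cb"
  shows "integrable M g"
proof -
  interpret finite_measure M by fact
  obtain B where "\<And>y. \<bar>g y\<bar> \<le> B" using Cb_boundE[OF assms(3)] by metis
  then show ?thesis by (intro integrable_const_bound[of _ B] borel_measurable_Cb assms) auto
qed

definition cutoff :: "real \<Rightarrow> real \<Rightarrow> real" where
  "cutoff R t = max 0 (min 1 (R + 1 - \<bar>t\<bar>))"

lemma cutoff_nonneg: "0 \<le> cutoff R t"
  and cutoff_le_1: "cutoff R t \<le> 1"
  by (auto simp: cutoff_def)

lemma cutoff_eq_1: "\<bar>t\<bar> \<le> R \<Longrightarrow> cutoff R t = 1"
  and cutoff_eq_0: "R + 1 \<le> \<bar>t\<bar> \<Longrightarrow> cutoff R t = 0"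
  by (auto simp: cutoff_def)

lemma continuous_on_cutoff: "continuous_on A (cutoff R)"
  unfolding cutoff_def by (intro continuous_intros)

lemma Cc_mult_cutoff:
  assumes "continuous_on UNIV u"
  shows "(\<lambda>t. u t * cutoff R t) \<in> Cc"
proof -
  have "continuous_on UNIV (\<lambda>t. u t * cutoff R t)"
    using assms continuous_on_cutoff by (rule continuous_on_mult)
  moreover have "u t * cutoff R t = 0" if "t \<notin> {-(R+1)..R+1}" for t
  proof -
    have "R + 1 \<le> \<bar>t\<bar>" using that by auto
    then show ?thesis by (simp add: cutoff_eq_0)
  qed
  ultimately show ?thesis unfolding Cc_def by blast
qed

lemma cutoff_in_Cc: "cutoff R \<in> Cc"
  using Cc_mult_cutoff[of "\<lambda>_. 1" R] by simp

lemma cs_prob_iff_AE_bounded: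
  "M \<in> cs_prob \<longleftrightarrow> prob_space M \<and> sets M = sets borel \<and> (\<exists>R. AE y in M. \<bar>y\<bar> \<le> R)"
proof
  assume "M \<in> cs_prob"
  then obtain K where M: "prob_space M" "sets M = sets borel" "compact K" "emeasure M (UNIV - K) = 0"
    by (auto simp: cs_prob_def)
  obtain R where R: "\<forall>y\<in>K. norm y \<le> R" using compact_imp_bounded[OF M(3)] bounded_iff by metis
  have "UNIV - K \<in> null_sets M"
    using M(2-4) compact_imp_closed[OF M(3)] by (auto simp: open_Diff)
  then have "AE y in M. \<bar>y\<bar> \<le> R" using R by (intro AE_I'[of "UNIV - K"]) auto
  with M show "prob_space M \<and> sets M = sets borel \<and> (\<exists>R. AE y in M. \<bar>y\<bar> \<le> R)" by auto
next
  assume "prob_space M \<and> sets M = sets borel \<and> (\<exists>R. AE y in M. \<bar>y\<bar> \<le> R)"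
  then obtain R where M: "prob_space M" "sets M = sets borel" "AE y in M. \<bar>y\<bar> \<le> R" by auto
  have "space M = UNIV" using sets_eq_imp_space_eq[OF M(2)] by simp
  then have "{y \<in> space M. \<not> \<bar>y\<bar> \<le> R} = UNIV - {-R..R}" by auto
  moreover have "UNIV - {-R..R} \<in> sets M" using M(2) by auto
  ultimately have "emeasure M (UNIV - {-R..R}) = 0"
    using AE_iff_measurable M(3) by metis
  then show "M \<in> cs_prob" using M by (auto simp: cs_prob_def intro!: exI[of _ "{-R..R}"])
qed

lemma integral_cutoff_eq_1:
  assumes "prob_space M" "sets M = sets borel" "AE y in M. \<bar>y\<bar> \<le> R"
  shows "integral\<^sup>L M (cutoff R) = 1"
proof -
  have "integral\<^sup>L M (cutoff R) = integral\<^sup>L M (\<lambda>y. 1)"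
    using assms(2,3) cutoff_eq_1
    by (intro integral_cong_AE borel_measurable_Cb[OF subsetD[OF Cc_subset_Cb cutoff_in_Cc]]) auto
  then show ?thesis using prob_space.prob_space[OF assms(1)] by simp
qed

lemma abs_integral_diff_cutoff_le:
  assumes "prob_space M" "sets M = sets borel" "\<psi> \<in> Cb" "\<And>y. \<bar>\<psi> y\<bar> \<le> B"
  shows "\<bar>integral\<^sup>L M \<psi> - integral\<^sup>L M (\<lambda>y. \<psi> y * cutoff R y)\<bar> \<le> B * (1 - integral\<^sup>L M (cutoff R))"
proof -
  interpret prob_space M by fact
  have int: "integrable M g" if "g \<in> Cb" for g
    using integrable_Cb[OF finite_measure_axioms assms(2) that] .
  have \<psi>\<chi>: "(\<lambda>y. \<psi> y * cutoff R y) \<in> Cb" and \<chi>: "cutoff R \<in> Cb"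
    using Cc_subset_Cb Cc_mult_cutoff[OF Cb_continuous[OF assms(3)]] cutoff_in_Cc by auto
  have "\<bar>\<psi> y - \<psi> y * cutoff R y\<bar> \<le> B * (1 - cutoff R y)" for y
  proof -
    have "\<bar>\<psi> y - \<psi> y * cutoff R y\<bar> = \<bar>\<psi> y * (1 - cutoff R y)\<bar>"
      by (simp add: algebra_simps)
    also have "\<dots> = \<bar>\<psi> y\<bar> * (1 - cutoff R y)"
      using cutoff_le_1[of R y] by (simp add: abs_mult)
    also have "\<dots> \<le> B * (1 - cutoff R y)"
      using assms(4) cutoff_le_1[of R y] by (intro mult_right_mono) auto
    finally show ?thesis .
  qed
  then have "\<bar>integral\<^sup>L M (\<lambda>y. \<psi> y - \<psi> y * cutoff R y)\<bar> \<le> integral\<^sup>L M (\<lambda>y. B * (1 - cutoff R y))"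
    using int[OF assms(3)] int[OF \<psi>\<chi>] int[OF \<chi>] by (intro integral_abs_bound_integral) auto
  then show ?thesis
    using int[OF assms(3)] int[OF \<psi>\<chi>] int[OF \<chi>] by (simp add: prob_space)
qed

(* If rho lives on [-R, R], then int sigma (cutoff R) close to 1 forces sigma to put little mass
   outside [-R - 1, R + 1], where a bounded psi agrees with the compactly supported psi * cutoff R. *)
lemma tendsto_integral_Cb_test_nhds_Cc:
  assumes \<rho>: "\<rho> \<in> cs_prob" and \<psi>: "\<psi> \<in> Cb"
  shows "((\<lambda>\<sigma>. integral\<^sup>L \<sigma> \<psi>) \<longlongrightarrow> integral\<^sup>L \<rho> \<psi>) (test_nhds Cc \<rho>)"
proof (rule tendsto_by_approximation)
  fix \<eta> :: real assume "\<eta> > 0"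
  obtain R where R: "AE y in \<rho>. \<bar>y\<bar> \<le> R" and \<rho>': "prob_space \<rho>" "sets \<rho> = sets borel"
    using \<rho> by (auto simp: cs_prob_iff_AE_bounded)
  obtain B where B: "B \<ge> 0" "\<And>y. \<bar>\<psi> y\<bar> \<le> B" using Cb_boundE[OF \<psi>] by metis
  let ?\<psi>\<chi> = "\<lambda>y. \<psi> y * cutoff R y"
  have "integral\<^sup>L \<rho> \<psi> = integral\<^sup>L \<rho> ?\<psi>\<chi>"
    using abs_integral_diff_cutoff_le[OF \<rho>' \<psi> B(2), of R] integral_cutoff_eq_1[OF \<rho>' R] by simp
  moreover have "((\<lambda>\<sigma>. integral\<^sup>L \<sigma> ?\<psi>\<chi>) \<longlongrightarrow> integral\<^sup>L \<rho> ?\<psi>\<chi>) (test_nhds Cc \<rho>)"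
    using Cc_mult_cutoff[OF Cb_continuous[OF \<psi>]] by (rule tendsto_integral_test_nhds)
  moreover have "((\<lambda>\<sigma>. integral\<^sup>L \<sigma> (cutoff R)) \<longlongrightarrow> 1) (test_nhds Cc \<rho>)"
    using tendsto_integral_test_nhds[where \<rho>=\<rho>, OF cutoff_in_Cc[of R]] integral_cutoff_eq_1[OF \<rho>' R] by simp
  then have "((\<lambda>\<sigma>. B * (1 - integral\<^sup>L \<sigma> (cutoff R))) \<longlongrightarrow> B * (1 - 1)) (test_nhds Cc \<rho>)"
    by (intro tendsto_intros)
  moreover have "\<forall>\<^sub>F \<sigma> in test_nhds Cc \<rho>.
      \<bar>integral\<^sup>L \<sigma> \<psi> - integral\<^sup>L \<sigma> ?\<psi>\<chi>\<bar> \<le> \<eta> + B * (1 - integral\<^sup>L \<sigma> (cutoff R))"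
    using eventually_test_nhds_cs_prob
  proof eventually_elim
    case (elim \<sigma>)
    then have "prob_space \<sigma>" "sets \<sigma> = sets borel" by (auto simp: cs_prob_iff_AE_bounded)
    from abs_integral_diff_cutoff_le[OF this \<psi> B(2), of R] show ?case
      using \<open>\<eta> > 0\<close> by linarith
  qed
  ultimately show "\<exists>g d e. (g \<longlongrightarrow> d) (test_nhds Cc \<rho>) \<and> (e \<longlongrightarrow> 0) (test_nhds Cc \<rho>) \<and>
      \<bar>integral\<^sup>L \<rho> \<psi> - d\<bar> \<le> \<eta> \<and> (\<forall>\<^sub>F \<sigma> in test_nhds Cc \<rho>. \<bar>integral\<^sup>L \<sigma> \<psi> - g \<sigma>\<bar> \<le> \<eta> + e \<sigma>)"
    using \<open>\<eta> > 0\<close> by (intro exI conjI) auto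
qed

lemma test_nhds_Cc_le_Cb:
  assumes "\<rho> \<in> cs_prob"
  shows "test_nhds Cc \<rho> \<le> test_nhds Cb \<rho>"
proof (rule filter_leI)
  fix P assume "eventually P (test_nhds Cb \<rho>)"
  then obtain F \<delta> where F: "finite F" "F \<subseteq> Cb" "\<delta> > 0" and P: "\<forall>\<sigma>\<in>test_ball \<rho> F \<delta>. P \<sigma>"
    unfolding eventually_test_nhds by blast
  have "\<forall>\<^sub>F \<sigma> in test_nhds Cc \<rho>. \<forall>\<psi>\<in>F. \<bar>integral\<^sup>L \<sigma> \<psi> - integral\<^sup>L \<rho> \<psi>\<bar> < \<delta>"
  proof (rule eventually_ball_finite[OF \<open>finite F\<close>], rule ballI)
    fix \<psi> assume "\<psi> \<in> F"
    then show "\<forall>\<^sub>F \<sigma> in test_nhds Cc \<rho>. \<bar>integral\<^sup>L \<sigma> \<psi> - integral\<^sup>L \<rho> \<psi>\<bar> < \<delta>"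
      using tendstoD[OF tendsto_integral_Cb_test_nhds_Cc[OF assms], of \<psi> \<delta>] F
      by (auto simp: dist_real_def)
  qed
  with eventually_test_nhds_cs_prob show "eventually P (test_nhds Cc \<rho>)"
    by eventually_elim (use P in \<open>auto simp: test_ball_def\<close>)
qed

section \<open>Operators continuous for the weak topology\<close>

definition weak_continuous_at :: "real measure \<Rightarrow> (real measure \<Rightarrow> real measure) \<Rightarrow> bool" where
  "weak_continuous_at \<rho> T \<longleftrightarrow> T ` cs_prob \<subseteq> cs_prob \<and>
     (\<forall>g\<in>Cb. ((\<lambda>\<sigma>. integral\<^sup>L (T \<sigma>) g) \<longlongrightarrow> integral\<^sup>L (T \<rho>) g) (test_nhds Cb \<rho>))"

lemma weak_continuous_at_cs_prob: "weak_continuous_at \<rho> T \<Longrightarrow> \<sigma> \<in> cs_prob \<Longrightarrow> T \<sigma> \<in> cs_prob"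
  and weak_continuous_at_tendsto: "weak_continuous_at \<rho> T \<Longrightarrow> g \<in> Cb \<Longrightarrow>
    ((\<lambda>\<sigma>. integral\<^sup>L (T \<sigma>) g) \<longlongrightarrow> integral\<^sup>L (T \<rho>) g) (test_nhds Cb \<rho>)"
  by (auto simp: weak_continuous_at_def)

lemma continuous_map_vague_top_if_weak_continuous:
  assumes "\<And>\<rho>. \<rho> \<in> cs_prob \<Longrightarrow> weak_continuous_at \<rho> T"
  shows "continuous_map vague_top vague_top T"
proof (rule continuous_map_vague_topI)
  show "T ` cs_prob \<subseteq> cs_prob" using assms weak_continuous_at_cs_prob by blast
next
  fix \<rho> \<phi> assume "\<rho> \<in> cs_prob" "\<phi> \<in> Cc"
  then show "((\<lambda>\<sigma>. integral\<^sup>L (T \<sigma>) \<phi>) \<longlongrightarrow> integral\<^sup>L (T \<rho>) \<phi>) (test_nhds Cc \<rho>)"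
    using weak_continuous_at_tendsto[OF assms] Cc_subset_Cb
    by (blast intro: tendsto_mono[OF test_nhds_Cc_le_Cb])
qed

lemma weak_continuous_at_id: "weak_continuous_at \<rho> (\<lambda>\<sigma>. \<sigma>)"
  by (simp add: weak_continuous_at_def tendsto_integral_test_nhds)

lemma weak_continuous_at_const: "M \<in> cs_prob \<Longrightarrow> weak_continuous_at \<rho> (\<lambda>\<sigma>. M)"
  by (auto simp: weak_continuous_at_def)

lemma measurable_divide_const_borel:
  "sets M = sets borel \<Longrightarrow> (\<lambda>y. y / c) \<in> measurable M (borel :: real measure)"
  by (subst measurable_cong_sets[OF _ refl]) auto

(* No hypothesis on k: for k = 0 both sides degenerate, since y / 0 = 0. *)
lemma AE_push_h_bound:
  assumes "sets M = sets borel" "AE y in M. \<bar>y\<bar> \<le> R"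
  shows "AE y in push_h k M. \<bar>y\<bar> \<le> R / real k"
proof -
  have "AE y in M. \<bar>y / real k\<bar> \<le> R / real k"
    using assms(2) by eventually_elim (simp add: divide_right_mono)
  then show ?thesis
    unfolding push_h_def by (subst AE_distr_iff[OF measurable_divide_const_borel[OF assms(1)]]) auto
qed

lemma push_h_in_cs_prob:
  assumes "M \<in> cs_prob"
  shows "push_h k M \<in> cs_prob"
proof -
  obtain R where M: "prob_space M" "sets M = sets borel" "AE y in M. \<bar>y\<bar> \<le> R"
    using assms by (auto simp: cs_prob_iff_AE_bounded)
  have "prob_space (push_h k M)"
    unfolding push_h_def by (rule prob_space.prob_space_distr[OF M(1) measurable_divide_const_borel[OF M(2)]])
  moreover have "sets (push_h k M) = sets borel" by (simp add: push_h_def)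
  ultimately show ?thesis
    using AE_push_h_bound[OF M(2,3), of k] by (auto simp: cs_prob_iff_AE_bounded)
qed

lemma integral_push_h:
  fixes g :: "real \<Rightarrow> real"
  assumes "sets M = sets borel" "g \<in> borel_measurable borel"
  shows "integral\<^sup>L (push_h k M) g = integral\<^sup>L M (\<lambda>y. g (y / real k))"
  unfolding push_h_def
  by (rule integral_distr[OF measurable_divide_const_borel[OF assms(1)] assms(2)])

lemma weak_continuous_at_push_h:
  assumes \<rho>: "\<rho> \<in> cs_prob" and T: "weak_continuous_at \<rho> T"
  shows "weak_continuous_at \<rho> (\<lambda>\<sigma>. push_h k (T \<sigma>))"
  unfolding weak_continuous_at_def
proof (intro conjI ballI)
  show "(\<lambda>\<sigma>. push_h k (T \<sigma>)) ` cs_prob \<subseteq> cs_prob"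
    using weak_continuous_at_cs_prob[OF T] push_h_in_cs_prob by blast
next
  fix g assume g: "g \<in> Cb"
  have gk: "(\<lambda>y. g (y / real k)) \<in> Cb"
    using g by (rule Cb_compose_continuous) (simp only: divide_inverse, intro continuous_intros)
  have eq: "integral\<^sup>L (push_h k (T \<sigma>)) g = integral\<^sup>L (T \<sigma>) (\<lambda>y. g (y / real k))"
    if "\<sigma> \<in> cs_prob" for \<sigma>
    using weak_continuous_at_cs_prob[OF T that]
    by (intro integral_push_h borel_measurable_Cb[OF g refl]) (simp add: cs_prob_iff_AE_bounded)
  show "((\<lambda>\<sigma>. integral\<^sup>L (push_h k (T \<sigma>)) g) \<longlongrightarrow> integral\<^sup>L (push_h k (T \<rho>)) g) (test_nhds Cb \<rho>)"
    using weak_continuous_at_tendsto[OF T gk] by (rule tendsto_test_nhds_cong) (simp_all add: \<rho> eq)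
qed

section \<open>Separated approximation in the plane\<close>

definition separated :: "((real \<Rightarrow> real) \<times> (real \<Rightarrow> real)) list \<Rightarrow> real \<times> real \<Rightarrow> real" where
  "separated L z = (\<Sum>(u, v)\<leftarrow>L. u (fst z) * v (snd z))"

lemma separated_Nil [simp]: "separated [] z = 0"
  and separated_Cons [simp]: "separated ((u, v) # L) z = u (fst z) * v (snd z) + separated L z"
  and separated_append [simp]: "separated (L1 @ L2) z = separated L1 z + separated L2 z"
  by (simp_all add: separated_def)

lemma separated_product:
  "separated [(\<lambda>a. u a * u' a, \<lambda>b. v b * v' b). (u, v) \<leftarrow> L1, (u', v') \<leftarrow> L2] z =
     separated L1 z * separated L2 z"
proof (induction L1)
  case (Cons uv L1)
  have "separated (map (\<lambda>(u', v'). (\<lambda>a. fst uv a * u' a, \<lambda>b. snd uv b * v' b)) L2) z =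
      fst uv (fst z) * snd uv (snd z) * separated L2 z"
    by (induction L2) (auto simp: algebra_simps)
  with Cons show ?case by (cases uv) (simp add: algebra_simps)
qed simp

lemma real_polynomial_function_separated:
  fixes p :: "real \<times> real \<Rightarrow> real"
  assumes "real_polynomial_function p"
  shows "\<exists>L. (\<forall>(u, v)\<in>set L. continuous_on UNIV u \<and> continuous_on UNIV v) \<and> p = separated L"
  using assms
proof (induction p rule: real_polynomial_function.induct)
  case (linear f)
  let ?L = "[(\<lambda>a. a * f (1, 0), \<lambda>b. 1), (\<lambda>a. 1, \<lambda>b. b * f (0, 1))]"
  have lin: "f z = fst z * f (1, 0) + snd z * f (0, 1)" for z
  proof -
    have "f z = f (fst z *\<^sub>R (1, 0) + snd z *\<^sub>R (0, 1))" by (cases z) (simp add: scaleR_prod_def)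
    also have "\<dots> = fst z * f (1, 0) + snd z * f (0, 1)"
      by (simp only: linear_simps(1,5)[OF linear]) simp
    finally show ?thesis .
  qed
  have "f = separated ?L"
  proof
    fix z show "f z = separated ?L z" using lin[of z] by simp
  qed
  then show ?case by (intro exI[of _ ?L]) (simp add: continuous_on_mult_right)
next
  case (const c)
  show ?case by (intro exI[of _ "[(\<lambda>a. c, \<lambda>b. 1)]"]) (auto simp: fun_eq_iff)
next
  case (add f g)
  then obtain L1 L2 where "\<forall>(u, v)\<in>set L1. continuous_on UNIV u \<and> continuous_on UNIV v" "f = separated L1"
    "\<forall>(u, v)\<in>set L2. continuous_on UNIV u \<and> continuous_on UNIV v" "g = separated L2"
    by blast
  then show ?case by (intro exI[of _ "L1 @ L2"]) auto
next
  case (mult f g)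
  then obtain L1 L2 where L: "\<forall>(u, v)\<in>set L1. continuous_on UNIV u \<and> continuous_on UNIV v" "f = separated L1"
    "\<forall>(u, v)\<in>set L2. continuous_on UNIV u \<and> continuous_on UNIV v" "g = separated L2"
    by blast
  then show ?case
    by (intro exI[of _ "[(\<lambda>a. u a * u' a, \<lambda>b. v b * v' b). (u, v) \<leftarrow> L1, (u', v') \<leftarrow> L2]"])
      (fastforce simp: separated_product intro: continuous_on_mult)
qed

lemma separated_cutoff_approximation:
  fixes G :: "real \<times> real \<Rightarrow> real"
  assumes G: "continuous_on UNIV G" "\<And>z. \<bar>G z\<bar> \<le> B" and "\<eta> > 0"
  obtains L where "\<forall>(u, v)\<in>set L. u \<in> Cb \<and> v \<in> Cb"
    "\<And>z. \<bar>G z - separated L z\<bar> \<le> B * (1 - cutoff R (fst z) * cutoff R (snd z)) + \<eta>"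
proof -
  define S where "S = {-(R+1)..R+1} \<times> {-(R+1)..R+1}"
  obtain p where "real_polynomial_function p" and p: "\<And>z. z \<in> S \<Longrightarrow> \<bar>G z - p z\<bar> < \<eta>"
    using Stone_Weierstrass_real_polynomial_function[of S G \<eta>] G(1) \<open>\<eta> > 0\<close>
    by (auto simp: S_def intro: compact_Times continuous_on_subset)
  then obtain L0 where L0: "\<forall>(u, v)\<in>set L0. continuous_on UNIV u \<and> continuous_on UNIV v"
    and p_eq: "p = separated L0"
    using real_polynomial_function_separated by blast
  define L where "L = map (\<lambda>(u, v). (\<lambda>a. u a * cutoff R a, \<lambda>b. v b * cutoff R b)) L0"
  have "\<forall>(u, v)\<in>set L. u \<in> Cb \<and> v \<in> Cb"
    using L0 Cc_subset_Cb by (auto simp: L_def intro!: subsetD[OF _ Cc_mult_cutoff])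
  moreover have "\<bar>G z - separated L z\<bar> \<le> B * (1 - cutoff R (fst z) * cutoff R (snd z)) + \<eta>" for z
  proof -
    define c where "c = cutoff R (fst z) * cutoff R (snd z)"
    have c: "0 \<le> c" "c \<le> 1"
      by (auto simp: c_def cutoff_nonneg cutoff_le_1 mult_le_one)
    have "separated L z = p z * c"
      unfolding L_def p_eq c_def by (induction L0) (auto simp: algebra_simps)
    then have "\<bar>G z - separated L z\<bar> = \<bar>G z * (1 - c) + (G z - p z) * c\<bar>"
      by (simp add: algebra_simps)
    also have "\<dots> \<le> \<bar>G z\<bar> * (1 - c) + \<bar>G z - p z\<bar> * c"
      using c by (metis abs_mult abs_of_nonneg abs_triangle_ineq diff_ge_0_iff_ge)
    also have "\<bar>G z\<bar> * (1 - c) \<le> B * (1 - c)"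
      using G(2) c by (intro mult_right_mono) auto
    also have "\<bar>G z - p z\<bar> * c \<le> \<eta>"
    proof (cases "z \<in> S")
      case True
      then show ?thesis
        using p[of z] c \<open>\<eta> > 0\<close> mult_mono[of "\<bar>G z - p z\<bar>" \<eta> c 1] by auto
    next
      case False
      then have "R + 1 \<le> \<bar>fst z\<bar> \<or> R + 1 \<le> \<bar>snd z\<bar>"
        unfolding S_def by (cases z) (auto simp: abs_if)
      then have "c = 0" by (auto simp: c_def cutoff_eq_0)
      then show ?thesis using \<open>\<eta> > 0\<close> by simp
    qed
    finally show ?thesis unfolding c_def by simp
  qed
  ultimately show ?thesis using that by blast
qed

section \<open>Product measures and convolution\<close>

lemma tendsto_sum_list:
  fixes f :: "'a \<Rightarrow> 'b \<Rightarrow> 'c::topological_monoid_add"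
  shows "(\<And>x. x \<in> set xs \<Longrightarrow> (f x \<longlongrightarrow> c x) F) \<Longrightarrow> ((\<lambda>y. \<Sum>x\<leftarrow>xs. f x y) \<longlongrightarrow> (\<Sum>x\<leftarrow>xs. c x)) F"
  by (induction xs) (auto intro: tendsto_add)

lemma sets_pair_measure_borel:
  assumes "sets M = sets (borel :: real measure)" "sets N = sets (borel :: real measure)"
  shows "sets (M \<Otimes>\<^sub>M N) = sets (borel :: (real \<times> real) measure)"
  using sets_pair_measure_cong[OF assms] by (simp only: borel_prod)

lemma integrable_pair_measure_continuous:
  fixes H :: "real \<times> real \<Rightarrow> real"
  assumes "finite_measure M" "finite_measure N" "sets M = sets borel" "sets N = sets borel"
    and "continuous_on UNIV H" "\<And>z. \<bar>H z\<bar> \<le> C"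
  shows "integrable (M \<Otimes>\<^sub>M N) H"
proof -
  interpret finite_measure "M \<Otimes>\<^sub>M N"
    by (rule finite_measure_pair_measure[OF assms(2,1)])
  have "H \<in> borel_measurable (M \<Otimes>\<^sub>M N)"
    using borel_measurable_continuous_onI[OF assms(5)]
      measurable_cong_sets[OF sets_pair_measure_borel[OF assms(3,4)] refl] by blast
  then show ?thesis using assms(6) by (intro integrable_const_bound[of _ C]) auto
qed

lemma integral_pair_measure_Cb_mult:
  assumes M: "finite_measure M" "sets M = sets borel" and N: "finite_measure N" "sets N = sets borel"
    and uv: "u \<in> Cb" "v \<in> Cb"
  shows "integrable (M \<Otimes>\<^sub>M N) (\<lambda>z. u (fst z) * v (snd z))"
    and "integral\<^sup>L (M \<Otimes>\<^sub>M N) (\<lambda>z. u (fst z) * v (snd z)) = integral\<^sup>L M u * integral\<^sup>L N v"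
proof -
  obtain A B where "\<And>y. \<bar>u y\<bar> \<le> A" "\<And>y. \<bar>v y\<bar> \<le> B" "A \<ge> 0" "B \<ge> 0"
    using Cb_boundE uv by metis
  then have "\<bar>u (fst z) * v (snd z)\<bar> \<le> A * B" for z by (simp add: abs_mult mult_mono)
  moreover have "continuous_on UNIV (\<lambda>z::real \<times> real. u (fst z) * v (snd z))"
    using Cb_continuous[OF uv(1)] Cb_continuous[OF uv(2)]
    by (intro continuous_on_mult continuous_on_compose2[where g=u and f=fst]
        continuous_on_compose2[where g=v and f=snd] continuous_intros) auto
  ultimately show int: "integrable (M \<Otimes>\<^sub>M N) (\<lambda>z. u (fst z) * v (snd z))"
    using integrable_pair_measure_continuous M N by blast
  interpret M: finite_measure M by (fact M)
  interpret N: finite_measure N by (fact N)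
  interpret pair_sigma_finite M N ..
  show "integral\<^sup>L (M \<Otimes>\<^sub>M N) (\<lambda>z. u (fst z) * v (snd z)) = integral\<^sup>L M u * integral\<^sup>L N v"
    using integral_fst'[OF int] by simp
qed

lemma integral_pair_measure_separated:
  assumes "finite_measure M" "sets M = sets borel" "finite_measure N" "sets N = sets borel"
    and "\<forall>(u, v)\<in>set L. u \<in> Cb \<and> v \<in> Cb"
  shows "integrable (M \<Otimes>\<^sub>M N) (separated L) \<and>
    integral\<^sup>L (M \<Otimes>\<^sub>M N) (separated L) = (\<Sum>(u, v)\<leftarrow>L. integral\<^sup>L M u * integral\<^sup>L N v)"
  using assms(5)
proof (induction L)
  case Nil
  then show ?case by (simp add: separated_def)
next
  case (Cons uv L)
  obtain u v where uv: "uv = (u, v)" by fastforce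
  have "u \<in> Cb" "v \<in> Cb" using Cons.prems uv by auto
  note uv_int = integral_pair_measure_Cb_mult[OF assms(1-4) this]
  have "separated (uv # L) = (\<lambda>z. u (fst z) * v (snd z) + separated L z)"
    by (simp add: uv fun_eq_iff)
  then show ?case using Cons uv_int by (simp add: uv)
qed

lemma abs_integral_pair_measure_separated_le:
  fixes G :: "real \<times> real \<Rightarrow> real"
  assumes M: "prob_space M" "sets M = sets borel" and N: "prob_space N" "sets N = sets borel"
    and G: "continuous_on UNIV G" "\<And>z. \<bar>G z\<bar> \<le> B"
    and L: "\<forall>(u, v)\<in>set L. u \<in> Cb \<and> v \<in> Cb"
    and approx: "\<And>z. \<bar>G z - separated L z\<bar> \<le> B * (1 - cutoff R (fst z) * cutoff R (snd z)) + \<eta>"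
  shows "\<bar>integral\<^sup>L (M \<Otimes>\<^sub>M N) G - (\<Sum>(u, v)\<leftarrow>L. integral\<^sup>L M u * integral\<^sup>L N v)\<bar>
    \<le> B * (1 - integral\<^sup>L M (cutoff R) * integral\<^sup>L N (cutoff R)) + \<eta>"
proof -
  interpret P: prob_space "M \<Otimes>\<^sub>M N" using M(1) N(1) by (rule prob_space_pair)
  have fin: "finite_measure M" "finite_measure N"
    using M(1) N(1) by (simp_all add: prob_space.finite_measure)
  have \<chi>: "cutoff R \<in> Cb" using cutoff_in_Cc Cc_subset_Cb by auto
  note sepL = integral_pair_measure_separated[OF fin(1) M(2) fin(2) N(2) L]
  note sep\<chi> = integral_pair_measure_Cb_mult[OF fin(1) M(2) fin(2) N(2) \<chi> \<chi>]
  have intG: "integrable (M \<Otimes>\<^sub>M N) G"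
    using integrable_pair_measure_continuous[OF fin(1,2) M(2) N(2) G] .
  have "\<bar>integral\<^sup>L (M \<Otimes>\<^sub>M N) (\<lambda>z. G z - separated L z)\<bar>
      \<le> integral\<^sup>L (M \<Otimes>\<^sub>M N) (\<lambda>z. B * (1 - cutoff R (fst z) * cutoff R (snd z)) + \<eta>)"
    using intG sepL sep\<chi> approx by (intro integral_abs_bound_integral) auto
  then show ?thesis
    using intG sepL sep\<chi> by (simp add: P.prob_space)
qed

(* G is approximated by a finite sum of products u(x) v(y), whose integrals factor; the error is
   small on a square carrying T1 rho and T2 rho, and the cutoff term bounds it elsewhere. *)
lemma tendsto_integral_pair_measure:
  fixes G :: "real \<times> real \<Rightarrow> real"
  assumes \<rho>: "\<rho> \<in> cs_prob" and T1: "weak_continuous_at \<rho> T1" and T2: "weak_continuous_at \<rho> T2"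
    and G: "continuous_on UNIV G" "\<And>z. \<bar>G z\<bar> \<le> B"
  shows "((\<lambda>\<sigma>. integral\<^sup>L (T1 \<sigma> \<Otimes>\<^sub>M T2 \<sigma>) G) \<longlongrightarrow> integral\<^sup>L (T1 \<rho> \<Otimes>\<^sub>M T2 \<rho>) G) (test_nhds Cb \<rho>)"
proof (rule tendsto_by_approximation)
  fix \<eta> :: real assume "\<eta> > 0"
  have meas: "prob_space (T \<sigma>)" "sets (T \<sigma>) = sets borel"
    if "weak_continuous_at \<rho> T" "\<sigma> \<in> cs_prob" for T \<sigma>
    using weak_continuous_at_cs_prob[OF that] by (auto simp: cs_prob_iff_AE_bounded)
  obtain R1 R2 where "AE y in T1 \<rho>. \<bar>y\<bar> \<le> R1" "AE y in T2 \<rho>. \<bar>y\<bar> \<le> R2"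
    using weak_continuous_at_cs_prob[OF T1 \<rho>] weak_continuous_at_cs_prob[OF T2 \<rho>]
    by (auto simp: cs_prob_iff_AE_bounded)
  then have R: "AE y in T1 \<rho>. \<bar>y\<bar> \<le> max R1 R2" "AE y in T2 \<rho>. \<bar>y\<bar> \<le> max R1 R2"
    by auto
  obtain L where L: "\<forall>(u, v)\<in>set L. u \<in> Cb \<and> v \<in> Cb"
    and approx: "\<And>z. \<bar>G z - separated L z\<bar>
      \<le> B * (1 - cutoff (max R1 R2) (fst z) * cutoff (max R1 R2) (snd z)) + \<eta>"
    using separated_cutoff_approximation[OF G \<open>\<eta> > 0\<close>] by metis
  define g where "g \<sigma> = (\<Sum>(u, v)\<leftarrow>L. integral\<^sup>L (T1 \<sigma>) u * integral\<^sup>L (T2 \<sigma>) v)" for \<sigma>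
  define e where "e \<sigma> = B * (1 - integral\<^sup>L (T1 \<sigma>) (cutoff (max R1 R2)) *
    integral\<^sup>L (T2 \<sigma>) (cutoff (max R1 R2)))" for \<sigma>
  have bound: "\<bar>integral\<^sup>L (T1 \<sigma> \<Otimes>\<^sub>M T2 \<sigma>) G - g \<sigma>\<bar> \<le> \<eta> + e \<sigma>" if "\<sigma> \<in> cs_prob" for \<sigma>
    using abs_integral_pair_measure_separated_le[OF meas[OF T1 that] meas[OF T2 that] G L approx]
    by (simp add: g_def e_def)
  have "(g \<longlongrightarrow> g \<rho>) (test_nhds Cb \<rho>)"
    unfolding g_def using L
    by (intro tendsto_sum_list) (auto intro!: tendsto_mult weak_continuous_at_tendsto[OF T1]
        weak_continuous_at_tendsto[OF T2])
  moreover have "e \<rho> = 0"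
    using integral_cutoff_eq_1[OF meas[OF T1 \<rho>] R(1)] integral_cutoff_eq_1[OF meas[OF T2 \<rho>] R(2)]
    by (simp add: e_def)
  moreover have "(e \<longlongrightarrow> e \<rho>) (test_nhds Cb \<rho>)"
    unfolding e_def using cutoff_in_Cc Cc_subset_Cb
    by (intro tendsto_intros weak_continuous_at_tendsto[OF T1] weak_continuous_at_tendsto[OF T2]) auto
  moreover have "\<forall>\<^sub>F \<sigma> in test_nhds Cb \<rho>. \<bar>integral\<^sup>L (T1 \<sigma> \<Otimes>\<^sub>M T2 \<sigma>) G - g \<sigma>\<bar> \<le> \<eta> + e \<sigma>"
    using eventually_test_nhds_cs_prob by eventually_elim (rule bound)
  ultimately show "\<exists>g d e. (g \<longlongrightarrow> d) (test_nhds Cb \<rho>) \<and> (e \<longlongrightarrow> 0) (test_nhds Cb \<rho>) \<and>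
      \<bar>integral\<^sup>L (T1 \<rho> \<Otimes>\<^sub>M T2 \<rho>) G - d\<bar> \<le> \<eta> \<and>
      (\<forall>\<^sub>F \<sigma> in test_nhds Cb \<rho>. \<bar>integral\<^sup>L (T1 \<sigma> \<Otimes>\<^sub>M T2 \<sigma>) G - g \<sigma>\<bar> \<le> \<eta> + e \<sigma>)"
    using bound[OF \<rho>] by (intro exI[of _ g] exI[of _ "g \<rho>"] exI[of _ e]) auto
qed

lemma measurable_add_pair_measure:
  assumes "sets M = sets (borel :: real measure)" "sets N = sets (borel :: real measure)"
  shows "(\<lambda>(x, y). x + y) \<in> borel_measurable (M \<Otimes>\<^sub>M N)"
proof -
  have "(\<lambda>z::real \<times> real. fst z + snd z) \<in> borel_measurable borel"
    by (intro borel_measurable_continuous_onI continuous_intros)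
  then show ?thesis
    by (subst measurable_cong_sets[OF sets_pair_measure_borel[OF assms] refl]) (simp add: split_beta')
qed

lemma integral_convolution:
  fixes g :: "real \<Rightarrow> real"
  assumes "sets M = sets borel" "sets N = sets borel" "g \<in> borel_measurable borel"
  shows "integral\<^sup>L (convolution M N) g = integral\<^sup>L (M \<Otimes>\<^sub>M N) (\<lambda>z. g (fst z + snd z))"
  unfolding convolution_def integral_distr[OF measurable_add_pair_measure[OF assms(1,2)] assms(3)]
  by (simp add: split_beta')

lemma prob_space_convolution:
  fixes M N :: "real measure"
  assumes "prob_space M" "prob_space N" "sets M = sets borel" "sets N = sets borel"
  shows "prob_space (convolution M N)"
  unfolding convolution_def
  using prob_space.prob_space_distr[OF prob_space_pair[OF assms(1,2)]
      measurable_add_pair_measure[OF assms(3,4)]] .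

lemma AE_convolution_bound:
  fixes M N :: "real measure"
  assumes "prob_space M" "prob_space N" "sets M = sets borel" "sets N = sets borel"
    and "AE x in M. \<bar>x\<bar> \<le> R1" "AE y in N. \<bar>y\<bar> \<le> R2"
  shows "AE z in convolution M N. \<bar>z\<bar> \<le> R1 + R2"
proof -
  interpret pair_prob_space M N
    using assms(1,2) by (simp add: pair_prob_space_def pair_sigma_finite_def prob_space_imp_sigma_finite)
  have add: "(\<lambda>(x, y). x + y) \<in> borel_measurable (M \<Otimes>\<^sub>M N)"
    using assms(3,4) by (rule measurable_add_pair_measure)
  then have "(\<lambda>z. fst z + snd z) \<in> borel_measurable (M \<Otimes>\<^sub>M N)"
    by (simp add: split_beta')
  then have meas: "{z \<in> space (M \<Otimes>\<^sub>M N). \<bar>fst z + snd z\<bar> \<le> R1 + R2} \<in> sets (M \<Otimes>\<^sub>M N)"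
    by measurable
  have "AE x in M. AE y in N. \<bar>x + y\<bar> \<le> R1 + R2"
    using assms(5) by eventually_elim (use assms(6) in auto)
  then have "AE z in M \<Otimes>\<^sub>M N. \<bar>fst z + snd z\<bar> \<le> R1 + R2"
    using meas by (intro AE_pair_measure) auto
  then show ?thesis
    unfolding convolution_def by (subst AE_distr_iff[OF add]) (auto simp: split_beta')
qed

lemma convolution_in_cs_prob:
  assumes "M \<in> cs_prob" "N \<in> cs_prob"
  shows "convolution M N \<in> cs_prob"
proof -
  obtain R1 R2 where M: "prob_space M" "sets M = sets borel" "AE x in M. \<bar>x\<bar> \<le> R1"
    and N: "prob_space N" "sets N = sets borel" "AE y in N. \<bar>y\<bar> \<le> R2"
    using assms by (auto simp: cs_prob_iff_AE_bounded)
  show ?thesis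
    using prob_space_convolution[OF M(1) N(1) M(2) N(2)]
      AE_convolution_bound[OF M(1) N(1) M(2) N(2) M(3) N(3)]
    by (auto simp: cs_prob_iff_AE_bounded)
qed

lemma weak_continuous_at_convolution:
  assumes \<rho>: "\<rho> \<in> cs_prob" and T1: "weak_continuous_at \<rho> T1" and T2: "weak_continuous_at \<rho> T2"
  shows "weak_continuous_at \<rho> (\<lambda>\<sigma>. convolution (T1 \<sigma>) (T2 \<sigma>))"
  unfolding weak_continuous_at_def
proof (intro conjI ballI)
  show "(\<lambda>\<sigma>. convolution (T1 \<sigma>) (T2 \<sigma>)) ` cs_prob \<subseteq> cs_prob"
    using T1 T2 by (auto intro: convolution_in_cs_prob weak_continuous_at_cs_prob)
next
  fix g assume g: "g \<in> Cb"
  obtain B where B: "\<And>y. \<bar>g y\<bar> \<le> B" using Cb_boundE[OF g] by metis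
  have eq: "integral\<^sup>L (convolution (T1 \<sigma>) (T2 \<sigma>)) g = integral\<^sup>L (T1 \<sigma> \<Otimes>\<^sub>M T2 \<sigma>) (\<lambda>z. g (fst z + snd z))"
    if "\<sigma> \<in> cs_prob" for \<sigma>
    using weak_continuous_at_cs_prob[OF T1 that] weak_continuous_at_cs_prob[OF T2 that]
    by (intro integral_convolution borel_measurable_Cb[OF g]) (auto simp: cs_prob_iff_AE_bounded)
  have "continuous_on UNIV (\<lambda>z::real \<times> real. g (fst z + snd z))"
    by (intro continuous_on_compose2[OF Cb_continuous[OF g]] continuous_intros) auto
  moreover have "\<bar>g (fst z + snd z)\<bar> \<le> B" for z using B .
  ultimately have "((\<lambda>\<sigma>. integral\<^sup>L (T1 \<sigma> \<Otimes>\<^sub>M T2 \<sigma>) (\<lambda>z. g (fst z + snd z)))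
      \<longlongrightarrow> integral\<^sup>L (T1 \<rho> \<Otimes>\<^sub>M T2 \<rho>) (\<lambda>z. g (fst z + snd z))) (test_nhds Cb \<rho>)"
    by (rule tendsto_integral_pair_measure[OF \<rho> T1 T2])
  then show "((\<lambda>\<sigma>. integral\<^sup>L (convolution (T1 \<sigma>) (T2 \<sigma>)) g)
      \<longlongrightarrow> integral\<^sup>L (convolution (T1 \<rho>) (T2 \<rho>)) g) (test_nhds Cb \<rho>)"
    by (rule tendsto_test_nhds_cong) (simp_all add: \<rho> eq)
qed

lemma return_in_cs_prob: "return borel (x :: real) \<in> cs_prob"
  by (auto simp: cs_prob_iff_AE_bounded AE_return prob_space_return intro!: exI[of _ "\<bar>x\<bar>"])

lemma conv_pow_in_cs_prob: "\<sigma> \<in> cs_prob \<Longrightarrow> conv_pow \<sigma> n \<in> cs_prob"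
  by (induction n) (auto intro: return_in_cs_prob convolution_in_cs_prob)

lemma AE_conv_pow_bound:
  assumes "\<sigma> \<in> cs_prob" "AE y in \<sigma>. \<bar>y\<bar> \<le> R"
  shows "AE y in conv_pow \<sigma> n. \<bar>y\<bar> \<le> real n * R"
proof (induction n)
  case 0
  show ?case by (simp only: conv_pow.simps, subst AE_return) auto
next
  case (Suc n)
  have "prob_space \<sigma>" "prob_space (conv_pow \<sigma> n)" "sets \<sigma> = sets borel" "sets (conv_pow \<sigma> n) = sets borel"
    using assms(1) conv_pow_in_cs_prob[OF assms(1)] by (auto simp: cs_prob_iff_AE_bounded)
  from AE_convolution_bound[OF this assms(2) Suc.IH] show ?case
    by (simp only: conv_pow.simps) (simp add: algebra_simps)
qed

lemma weak_continuous_at_conv_pow: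
  "\<rho> \<in> cs_prob \<Longrightarrow> weak_continuous_at \<rho> (\<lambda>\<sigma>. conv_pow \<sigma> n)"
  by (induction n) (auto intro: weak_continuous_at_const return_in_cs_prob
      weak_continuous_at_convolution weak_continuous_at_id)

section \<open>Poisson mixtures\<close>

lemma measurable_pmf_prob_algebra:
  fixes p :: "'a pmf"
  assumes "\<And>n. prob_space (Ms n)" "\<And>n. sets (Ms n) = sets borel"
  shows "Ms \<in> measure_pmf p \<rightarrow>\<^sub>M prob_algebra borel"
  unfolding measurable_pmf_measure1 space_prob_algebra using assms by (simp add: Pi_iff)

lemma poisson_mix_eq_bind:
  assumes l: "l > 0" and Ms: "\<And>n. prob_space (Ms n)" "\<And>n. sets (Ms n) = sets borel"
  shows "poisson_mix l Ms = measure_pmf (poisson_pmf l) \<bind> Ms"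
proof -
  let ?P = "measure_pmf (poisson_pmf l)"
  have kernel: "Ms \<in> ?P \<rightarrow>\<^sub>M prob_algebra borel"
    using Ms by (rule measurable_pmf_prob_algebra)
  have "?P \<in> space (prob_algebra ?P)"
    by (simp add: space_prob_algebra measure_pmf.prob_space_axioms)
  note sets = sets_bind'[OF this kernel]
  have "emeasure (?P \<bind> Ms) A = (\<Sum>n. ennreal (poisson_weight l n) * emeasure (Ms n) A)"
    if "A \<in> sets borel" for A
  proof -
    have "emeasure (?P \<bind> Ms) A = (\<integral>\<^sup>+n. emeasure (Ms n) A \<partial>?P)"
      using that by (intro emeasure_bind[OF _ measurable_prob_algebraD[OF kernel]]) simp_all
    also have "\<dots> = (\<Sum>n. ennreal (pmf (poisson_pmf l) n) * emeasure (Ms n) A)"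
      by (simp add: nn_integral_measure_pmf nn_integral_count_space_nat)
    also have "\<dots> = (\<Sum>n. ennreal (poisson_weight l n) * emeasure (Ms n) A)"
      using l by (simp add: poisson_weight_def mult.commute)
    finally show ?thesis .
  qed
  then have "poisson_mix l Ms = measure_of UNIV (sets borel) (emeasure (?P \<bind> Ms))"
    unfolding poisson_mix_def
    by (intro measure_of_eq) (use sets.sigma_sets_eq[of "borel :: real measure"] in auto)
  also have "\<dots> = ?P \<bind> Ms"
    using measure_of_of_measure[of "?P \<bind> Ms"] sets_eq_imp_space_eq[OF sets] by (simp add: sets)
  finally show ?thesis .
qed

lemma poisson_mix_in_cs_prob:
  assumes l: "l > 0" and Ms: "\<And>n. Ms n \<in> cs_prob" and R: "\<And>n. AE y in Ms n. \<bar>y\<bar> \<le> R"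
  shows "poisson_mix l Ms \<in> cs_prob"
proof -
  let ?P = "measure_pmf (poisson_pmf l)"
  have Ms': "\<And>n. prob_space (Ms n)" "\<And>n. sets (Ms n) = sets borel"
    using Ms by (auto simp: cs_prob_iff_AE_bounded)
  have kernel: "Ms \<in> ?P \<rightarrow>\<^sub>M prob_algebra borel"
    using Ms' by (rule measurable_pmf_prob_algebra)
  have P: "?P \<in> space (prob_algebra ?P)"
    by (simp add: space_prob_algebra measure_pmf.prob_space_axioms)
  have "AE y in ?P \<bind> Ms. \<bar>y\<bar> \<le> R"
    using R by (subst AE_bind[OF measurable_prob_algebraD[OF kernel]]) auto
  then show ?thesis
    using prob_space_bind'[OF P kernel] sets_bind'[OF P kernel]
    by (auto simp: poisson_mix_eq_bind[OF l Ms'] cs_prob_iff_AE_bounded)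
qed

lemma integral_poisson_mix:
  assumes l: "l > 0" and Ms: "\<And>n. prob_space (Ms n)" "\<And>n. sets (Ms n) = sets borel"
    and g: "g \<in> Cb"
  shows "integral\<^sup>L (poisson_mix l Ms) g = (\<integral>n. integral\<^sup>L (Ms n) g \<partial>measure_pmf (poisson_pmf l))"
proof -
  obtain B where B: "\<And>y. \<bar>g y\<bar> \<le> B" using Cb_boundE[OF g] by metis
  have kernel: "Ms \<in> measure_pmf (poisson_pmf l) \<rightarrow>\<^sub>M subprob_algebra borel"
    using measurable_pmf_prob_algebra[OF Ms] by (rule measurable_prob_algebraD)
  show ?thesis unfolding poisson_mix_eq_bind[OF l Ms]
    using Ms(1) by (intro integral_bind[OF borel_measurable_Cb[OF g refl] B kernel, of 1])
      (auto simp: prob_space.emeasure_space_1)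
qed

lemma abs_integral_Cb_le:
  assumes "prob_space M" "sets M = sets borel" "g \<in> Cb" "\<And>y. \<bar>g y\<bar> \<le> B"
  shows "\<bar>integral\<^sup>L M g\<bar> \<le> B"
proof -
  interpret prob_space M by fact
  have "\<bar>integral\<^sup>L M g\<bar> \<le> integral\<^sup>L M (\<lambda>y. B)"
    using integrable_Cb[OF finite_measure_axioms assms(2,3)] assms(4)
    by (intro integral_abs_bound_integral) auto
  then show ?thesis by (simp add: prob_space)
qed

lemma abs_integral_pmf_sub_partial_sum_le:
  fixes f :: "nat \<Rightarrow> real"
  assumes "\<And>n. \<bar>f n\<bar> \<le> B"
  shows "\<bar>(\<integral>n. f n \<partial>measure_pmf p) - (\<Sum>n<N. f n * pmf p n)\<bar> \<le> B * measure_pmf.prob p (- {..<N})"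
proof -
  have int: "integrable (measure_pmf p) g" if "\<And>n. \<bar>g n\<bar> \<le> C" for g :: "nat \<Rightarrow> real" and C
    using that by (intro measure_pmf.integrable_const_bound[of _ C]) auto
  have "(\<Sum>n<N. f n * pmf p n) = (\<integral>n. f n * indicator {..<N} n \<partial>measure_pmf p)"
    by (subst integral_measure_pmf_real[of "{..<N}"]) (auto intro!: sum.cong simp: indicator_def)
  moreover have "integrable (measure_pmf p) (\<lambda>n. f n * indicator {..<N} n)"
    using assms order_trans[OF abs_ge_zero assms] by (intro int[of _ B]) (auto simp: indicator_def)
  ultimately have "(\<integral>n. f n \<partial>measure_pmf p) - (\<Sum>n<N. f n * pmf p n)
      = (\<integral>n. f n - f n * indicator {..<N} n \<partial>measure_pmf p)"
    using Bochner_Integration.integral_diff[OF int[OF assms]] by simp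
  also have "\<dots> = (\<integral>n. f n * indicator (- {..<N}) n \<partial>measure_pmf p)"
    by (intro Bochner_Integration.integral_cong) (auto simp: indicator_def)
  also have "\<bar>\<dots>\<bar> \<le> (\<integral>n. B * indicator (- {..<N}) n \<partial>measure_pmf p)"
    using assms order_trans[OF abs_ge_zero assms]
    by (intro order_trans[OF integral_abs_bound integral_mono] int[of _ B]) (auto simp: indicator_def)
  also have "\<dots> = B * measure_pmf.prob p (- {..<N})" by simp
  finally show ?thesis .
qed

(* Dominated convergence is not available along an arbitrary filter; truncating to a finite set
   of small tail probability replaces it. *)
lemma tendsto_integral_pmf_nat:
  fixes H :: "'a \<Rightarrow> nat \<Rightarrow> real" and p :: "nat pmf"
  assumes lim: "\<And>n. ((\<lambda>x. H x n) \<longlongrightarrow> H0 n) F"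
    and bound: "\<forall>\<^sub>F x in F. \<forall>n. \<bar>H x n\<bar> \<le> B" and bound0: "\<And>n. \<bar>H0 n\<bar> \<le> B"
  shows "((\<lambda>x. \<integral>n. H x n \<partial>measure_pmf p) \<longlongrightarrow> (\<integral>n. H0 n \<partial>measure_pmf p)) F"
proof (rule tendsto_by_approximation)
  fix \<eta> :: real assume "\<eta> > 0"
  have "B \<ge> 0" using bound0[of 0] by linarith
  have "(\<lambda>N. measure_pmf.prob p (- {..<N})) \<longlonglongrightarrow> measure_pmf.prob p (\<Inter>N. - {..<N})"
    by (rule measure_pmf.finite_Lim_measure_decseq) (auto simp: decseq_def)
  moreover have "(\<Inter>N. - {..<N::nat}) = {}"
  proof (rule equals0I)
    fix n assume "n \<in> (\<Inter>N. - {..<N::nat})"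
    then have "n \<in> - {..<Suc n}" by blast
    then show False by simp
  qed
  ultimately have "(\<lambda>N. measure_pmf.prob p (- {..<N})) \<longlonglongrightarrow> 0" by simp
  then have "\<forall>\<^sub>F N in sequentially. measure_pmf.prob p (- {..<N}) < \<eta> / (B + 1)"
    using \<open>\<eta> > 0\<close> \<open>B \<ge> 0\<close> by (intro order_tendstoD(2)) auto
  then obtain N where N: "measure_pmf.prob p (- {..<N}) < \<eta> / (B + 1)"
    unfolding eventually_sequentially by (metis order_refl)
  have tail: "B * measure_pmf.prob p (- {..<N}) \<le> \<eta>"
  proof -
    have "B * measure_pmf.prob p (- {..<N}) \<le> (B + 1) * (\<eta> / (B + 1))"
      using N \<open>B \<ge> 0\<close> by (intro mult_mono) auto
    then show ?thesis using \<open>B \<ge> 0\<close> by simp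
  qed
  have "((\<lambda>x. \<Sum>n<N. H x n * pmf p n) \<longlongrightarrow> (\<Sum>n<N. H0 n * pmf p n)) F"
    by (intro tendsto_sum tendsto_mult_right lim)
  moreover have "\<bar>(\<integral>n. H0 n \<partial>measure_pmf p) - (\<Sum>n<N. H0 n * pmf p n)\<bar> \<le> \<eta>"
    using order_trans[OF abs_integral_pmf_sub_partial_sum_le[OF bound0] tail] .
  moreover have "\<forall>\<^sub>F x in F. \<bar>(\<integral>n. H x n \<partial>measure_pmf p) - (\<Sum>n<N. H x n * pmf p n)\<bar> \<le> \<eta> + 0"
    using bound
  proof eventually_elim
    case (elim x)
    with abs_integral_pmf_sub_partial_sum_le[of "H x" B p N] tail show ?case by simp
  qed
  ultimately show "\<exists>g d e. (g \<longlongrightarrow> d) F \<and> (e \<longlongrightarrow> 0) F \<and> \<bar>(\<integral>n. H0 n \<partial>measure_pmf p) - d\<bar> \<le> \<eta> \<and>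
      (\<forall>\<^sub>F x in F. \<bar>(\<integral>n. H x n \<partial>measure_pmf p) - g x\<bar> \<le> \<eta> + e x)"
    by (intro exI[of _ "\<lambda>x. \<Sum>n<N. H x n * pmf p n"] exI[of _ "\<Sum>n<N. H0 n * pmf p n"]
        exI[of _ "\<lambda>x. 0"] conjI tendsto_const)
qed

lemma weak_continuous_at_poisson_mix:
  assumes l: "l > 0" and \<rho>: "\<rho> \<in> cs_prob" and T: "\<And>n. weak_continuous_at \<rho> (Ts n)"
    and R: "\<And>\<sigma>. \<sigma> \<in> cs_prob \<Longrightarrow> \<exists>R. \<forall>n. AE y in Ts n \<sigma>. \<bar>y\<bar> \<le> R"
  shows "weak_continuous_at \<rho> (\<lambda>\<sigma>. poisson_mix l (\<lambda>n. Ts n \<sigma>))"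
  unfolding weak_continuous_at_def
proof (intro conjI ballI)
  show "(\<lambda>\<sigma>. poisson_mix l (\<lambda>n. Ts n \<sigma>)) ` cs_prob \<subseteq> cs_prob"
  proof (rule image_subsetI)
    fix \<sigma> assume "\<sigma> \<in> cs_prob"
    then obtain R where "\<And>n. AE y in Ts n \<sigma>. \<bar>y\<bar> \<le> R" using R by blast
    with \<open>\<sigma> \<in> cs_prob\<close> show "poisson_mix l (\<lambda>n. Ts n \<sigma>) \<in> cs_prob"
      by (intro poisson_mix_in_cs_prob[OF l] weak_continuous_at_cs_prob[OF T])
  qed
next
  fix g assume g: "g \<in> Cb"
  obtain B where B: "\<And>y. \<bar>g y\<bar> \<le> B" using Cb_boundE[OF g] by metis
  have Ts: "prob_space (Ts n \<sigma>)" "sets (Ts n \<sigma>) = sets borel" if "\<sigma> \<in> cs_prob" for n \<sigma>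
    using weak_continuous_at_cs_prob[OF T that] by (auto simp: cs_prob_iff_AE_bounded)
  let ?I = "\<lambda>\<sigma>. \<integral>n. integral\<^sup>L (Ts n \<sigma>) g \<partial>measure_pmf (poisson_pmf l)"
  have eq: "integral\<^sup>L (poisson_mix l (\<lambda>n. Ts n \<sigma>)) g = ?I \<sigma>" if "\<sigma> \<in> cs_prob" for \<sigma>
    using integral_poisson_mix[OF l Ts[OF that] g] .
  have "(?I \<longlongrightarrow> ?I \<rho>) (test_nhds Cb \<rho>)"
  proof (rule tendsto_integral_pmf_nat)
    show "((\<lambda>\<sigma>. integral\<^sup>L (Ts n \<sigma>) g) \<longlongrightarrow> integral\<^sup>L (Ts n \<rho>) g) (test_nhds Cb \<rho>)" for n
      using T g by (rule weak_continuous_at_tendsto)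
    show "\<forall>\<^sub>F \<sigma> in test_nhds Cb \<rho>. \<forall>n. \<bar>integral\<^sup>L (Ts n \<sigma>) g\<bar> \<le> B"
      using eventually_test_nhds_cs_prob
      by eventually_elim (blast intro: abs_integral_Cb_le[OF Ts g B])
    show "\<bar>integral\<^sup>L (Ts n \<rho>) g\<bar> \<le> B" for n
      using abs_integral_Cb_le[OF Ts[OF \<rho>] g B] .
  qed
  then show "((\<lambda>\<sigma>. integral\<^sup>L (poisson_mix l (\<lambda>n. Ts n \<sigma>)) g)
      \<longlongrightarrow> integral\<^sup>L (poisson_mix l (\<lambda>n. Ts n \<rho>)) g) (test_nhds Cb \<rho>)"
    by (rule tendsto_test_nhds_cong) (simp_all add: \<rho> eq)
qed

lemma cs_prob_AE_bounded_nonneg: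
  assumes "M \<in> cs_prob"
  obtains R where "R \<ge> 0" "AE y in M. \<bar>y\<bar> \<le> R"
proof -
  obtain R where "AE y in M. \<bar>y\<bar> \<le> R" using assms by (auto simp: cs_prob_iff_AE_bounded)
  then have "AE y in M. \<bar>y\<bar> \<le> max R 0" by eventually_elim auto
  then show ?thesis by (intro that[of "max R 0"]) auto
qed

lemma AE_push_h_Suc_bound:
  assumes "sets M = sets borel" "AE y in M. \<bar>y\<bar> \<le> a + real n * R" "0 \<le> a" "0 \<le> R"
  shows "AE y in push_h (n + 1) M. \<bar>y\<bar> \<le> a + R"
proof -
  have "a + real n * R \<le> (a + R) * real (n + 1)"
    using assms(3,4) by (simp add: algebra_simps)
  then have le: "(a + real n * R) / real (n + 1) \<le> a + R"
    by (simp add: divide_le_eq)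
  from AE_push_h_bound[OF assms(1,2), of "n + 1"] show ?thesis
    by eventually_elim (use le in linarith)
qed

lemma weak_continuous_at_Sigma_x:
  assumes l: "l > 0" and \<rho>: "\<rho> \<in> cs_prob"
  shows "weak_continuous_at \<rho> (Sigma_x l x)"
  unfolding Sigma_x_def[abs_def]
proof (rule weak_continuous_at_poisson_mix[OF l \<rho>])
  show "weak_continuous_at \<rho> (\<lambda>\<sigma>. push_h (n + 1) (convolution (return borel x) (conv_pow \<sigma> n)))" for n
    by (intro weak_continuous_at_push_h weak_continuous_at_convolution weak_continuous_at_const
        weak_continuous_at_conv_pow return_in_cs_prob \<rho>)
next
  fix \<sigma> assume "\<sigma> \<in> cs_prob"
  then obtain R where R: "R \<ge> 0" "AE y in \<sigma>. \<bar>y\<bar> \<le> R" by (rule cs_prob_AE_bounded_nonneg)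
  have "AE y in convolution (return borel x) (conv_pow \<sigma> n). \<bar>y\<bar> \<le> \<bar>x\<bar> + real n * R" for n
    using \<open>\<sigma> \<in> cs_prob\<close> conv_pow_in_cs_prob[OF \<open>\<sigma> \<in> cs_prob\<close>, of n]
    by (intro AE_convolution_bound AE_conv_pow_bound[OF _ R(2)])
      (auto simp: cs_prob_iff_AE_bounded prob_space_return AE_return)
  then show "\<exists>R. \<forall>n. AE y in push_h (n + 1) (convolution (return borel x) (conv_pow \<sigma> n)). \<bar>y\<bar> \<le> R"
    using R(1) by (intro exI[of _ "\<bar>x\<bar> + R"] allI AE_push_h_Suc_bound) auto
qed

lemma weak_continuous_at_Sigma_op:
  assumes l: "l > 0" and \<rho>: "\<rho> \<in> cs_prob"
  shows "weak_continuous_at \<rho> (Sigma_op l)"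
  unfolding Sigma_op_def[abs_def]
proof (rule weak_continuous_at_poisson_mix[OF l \<rho>])
  show "weak_continuous_at \<rho> (\<lambda>\<sigma>. push_h (n + 1) (conv_pow \<sigma> (n + 1)))" for n
    by (intro weak_continuous_at_push_h weak_continuous_at_conv_pow \<rho>)
next
  fix \<sigma> assume "\<sigma> \<in> cs_prob"
  then obtain R where R: "R \<ge> 0" "AE y in \<sigma>. \<bar>y\<bar> \<le> R" by (rule cs_prob_AE_bounded_nonneg)
  have "AE y in conv_pow \<sigma> (n + 1). \<bar>y\<bar> \<le> R + real n * R" for n
    using AE_conv_pow_bound[OF \<open>\<sigma> \<in> cs_prob\<close> R(2), of "n + 1"] by (simp add: algebra_simps)
  then show "\<exists>R. \<forall>n. AE y in push_h (n + 1) (conv_pow \<sigma> (n + 1)). \<bar>y\<bar> \<le> R"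
    using R(1) conv_pow_in_cs_prob[OF \<open>\<sigma> \<in> cs_prob\<close>]
    by (intro exI[of _ "R + R"] allI AE_push_h_Suc_bound) (auto simp: cs_prob_iff_AE_bounded)
qed

theorem theorem3:
  fixes l x :: real
  assumes "l > 0"
  shows "continuous_map vague_top vague_top (Sigma_x l x) \<and>
         continuous_map vague_top vague_top (Sigma_op l)"
  using continuous_map_vague_top_if_weak_continuous weak_continuous_at_Sigma_x[OF assms]
    weak_continuous_at_Sigma_op[OF assms] by blast

end
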